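(* Let $\mathcal{A}$ be a commutative unital $C^*$-algebra and let $F\in B^a(H_{\mathcal{A}})$ be self-adjoint. Then $\sigma_p^{\mathcal{A}}(F)$ is a self-adjoint subset of $\mathcal{A}$, i.e. $\alpha\in\sigma_p^{\mathcal{A}}(F)$ if and only if $\alpha^*\in\sigma_p^{\mathcal{A}}(F)$.
   Context: $H_{\mathcal{A}}=l_2(\mathcal{A})$ is the standard Hilbert $C^*$-module of sequences $(x_1,x_2,\dots)$ in $\mathcal{A}$ with $\sum_k x_k^*x_k$ norm-convergent, inner product $\langle x,y\rangle=\sum_k x_k^*y_k$. $B^a(H_{\mathcal{A}})$ denotes the bounded adjointable $\mathcal{A}$-linear operators on $H_{\mathcal{A}}$. For $\alpha\in\mathcal{A}$, $\alpha I$ is the operator $(x_k)\mapsto(\alpha x_k)$. $\sigma_p^{\mathcal{A}}(F)=\{\alpha\in\mathcal{A}\mid\ker(F-\alpha I)\ne\{0\}\}$. *)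

theory Defs
  imports Complex_Main
begin

text \<open>The complex
scalar multiplication is scaleC; the real scalar multiplication inherited from
real_normed_algebra_1 is required to agree with it.\<close>

class comm_cstar_algebra = comm_ring_1 + real_normed_algebra_1 + banach +
  fixes scaleC :: "complex \<Rightarrow> 'a \<Rightarrow> 'a"
    and cstar :: "'a \<Rightarrow> 'a"
  assumes scaleC_add_right: "scaleC c (a + b) = scaleC c a + scaleC c b"
    and scaleC_add_left: "scaleC (c + d) a = scaleC c a + scaleC d a"
    and scaleC_scaleC: "scaleC c (scaleC d a) = scaleC (c * d) a"
    and scaleC_one: "scaleC 1 a = a"
    and scaleR_scaleC: "scaleR r a = scaleC (complex_of_real r) a"
    and mult_scaleC_left: "scaleC c a * b = scaleC c (a * b)"
    and norm_scaleC: "norm (scaleC c a) = cmod c * norm a"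
    and cstar_cstar: "cstar (cstar a) = a"
    and cstar_add: "cstar (a + b) = cstar a + cstar b"
    and cstar_scaleC: "cstar (scaleC c a) = scaleC (cnj c) (cstar a)"
    and cstar_mult: "cstar (a * b) = cstar b * cstar a"
    and cstar_identity: "norm (cstar a * a) = norm a * norm a"

definition hilbA :: "(nat \<Rightarrow> 'a::comm_cstar_algebra) set" where
  "hilbA = {x. summable (\<lambda>k. cstar (x k) * x k)}"

definition hinner :: "(nat \<Rightarrow> 'a::comm_cstar_algebra) \<Rightarrow> (nat \<Rightarrow> 'a) \<Rightarrow> 'a" where
  "hinner x y = (\<Sum>k. cstar (x k) * y k)"

definition hnorm :: "(nat \<Rightarrow> 'a::comm_cstar_algebra) \<Rightarrow> real" where
  "hnorm x = sqrt (norm (hinner x x))"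

definition Ba :: "((nat \<Rightarrow> 'a::comm_cstar_algebra) \<Rightarrow> (nat \<Rightarrow> 'a)) set" where
  "Ba = {F. (\<forall>x\<in>hilbA. F x \<in> hilbA)
     \<and> (\<forall>x\<in>hilbA. \<forall>y\<in>hilbA. F (\<lambda>k. x k + y k) = (\<lambda>k. F x k + F y k))
     \<and> (\<forall>x\<in>hilbA. \<forall>a. F (\<lambda>k. a * x k) = (\<lambda>k. a * F x k))
     \<and> (\<exists>C. \<forall>x\<in>hilbA. hnorm (F x) \<le> C * hnorm x)
     \<and> (\<exists>G. (\<forall>y\<in>hilbA. G y \<in> hilbA) \<and>
            (\<forall>x\<in>hilbA. \<forall>y\<in>hilbA. hinner (F x) y = hinner x (G y)))}"

definition selfadjoint_op :: "((nat \<Rightarrow> 'a::comm_cstar_algebra) \<Rightarrow> (nat \<Rightarrow> 'a)) \<Rightarrow> bool" where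
  "selfadjoint_op F \<longleftrightarrow> (\<forall>x\<in>hilbA. \<forall>y\<in>hilbA. hinner (F x) y = hinner x (F y))"

definition point_spectrumA :: "((nat \<Rightarrow> 'a::comm_cstar_algebra) \<Rightarrow> (nat \<Rightarrow> 'a)) \<Rightarrow> 'a set" where
  "point_spectrumA F = {\<alpha>. \<exists>x\<in>hilbA. x \<noteq> (\<lambda>_. 0) \<and> (\<lambda>k. F x k - \<alpha> * x k) = (\<lambda>_. 0)}"

end

theory Submission
  imports Defs "HOL-Computational_Algebra.Formal_Power_Series"
begin

text \<open>If F x = \<alpha> x with x \<noteq> 0, symmetry of F gives (\<alpha> - cstar \<alpha>) \<langle>x, x\<rangle> = 0.
For d = \<alpha> - cstar \<alpha> this yields \<langle>d x, d x\<rangle> = cstar d d \<langle>x, x\<rangle> = 0, so definiteness of the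
A-valued inner product gives d x = 0, i.e. F x = cstar \<alpha> x.

Definiteness is proved without spectral theory.
Call h positive if it is self-adjoint and norm (t - h) \<le> t for some real t. Positive elements
are closed under addition by the triangle inequality, h + \<epsilon> has a self-adjoint square root
given by the binomial series, and every cstar u u = x^2 + y^2 (for u = x + i y) is positive.
The C*-identity applied to r + i s gives (norm r)^2 \<le> norm (r^2 + s^2), so the norm is monotone
on positive elements; hence norm (cstar (x j) (x j)) is bounded by the norms of the partial sums
of \<langle>x, x\<rangle> = 0.\<close>

declare cstar_cstar [simp] cstar_add [simp] cstar_mult [simp]

lemma cstar_zero [simp]: "cstar (0::'a::comm_cstar_algebra) = 0"
  using cstar_add[of "0::'a" 0] by simp

lemma cstar_minus [simp]: "cstar (- a) = - cstar (a::'a::comm_cstar_algebra)"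
  using cstar_add[of a "- a"] by (simp add: eq_neg_iff_add_eq_0 add.commute)

lemma cstar_diff [simp]: "cstar (a - b) = cstar a - cstar (b::'a::comm_cstar_algebra)"
  using cstar_add[of a "- b"] by simp

lemma cstar_one [simp]: "cstar (1::'a::comm_cstar_algebra) = 1"
  using cstar_mult[of "cstar 1" "1::'a"] by simp

lemma cstar_scaleR [simp]: "cstar (r *\<^sub>R a) = r *\<^sub>R cstar (a::'a::comm_cstar_algebra)"
  by (simp add: scaleR_scaleC cstar_scaleC)

lemma cstar_of_real [simp]: "cstar (of_real r :: 'a::comm_cstar_algebra) = of_real r"
  by (simp add: of_real_def)

lemma cstar_power [simp]: "cstar (a ^ n) = cstar (a::'a::comm_cstar_algebra) ^ n"
  by (induction n) (simp_all add: mult.commute)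

lemma norm_cstar [simp]: "norm (cstar a) = norm (a::'a::comm_cstar_algebra)"
proof -
  have le: "norm (cstar b) \<le> norm b" for b :: 'a
  proof (cases "cstar b = 0")
    case False
    have "norm (cstar b) * norm (cstar b) = norm (b * cstar b)"
      using cstar_identity[of "cstar b"] by simp
    also have "\<dots> \<le> norm b * norm (cstar b)"
      by (rule norm_mult_ineq)
    finally show ?thesis
      using False by simp
  qed simp
  show ?thesis
    using le[of a] le[of "cstar a"] by simp
qed

lemma bounded_linear_cstar: "bounded_linear (cstar :: 'a::comm_cstar_algebra \<Rightarrow> 'a)"
  by (rule bounded_linear_intro[where K = 1]) simp_all

lemma norm_selfadjoint_square:
  "cstar x = x \<Longrightarrow> norm (x * x) = norm x * norm (x::'a::comm_cstar_algebra)"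
  using cstar_identity[of x] by simp

definition imag_unit :: "'a::comm_cstar_algebra" where
  "imag_unit = scaleC \<i> 1"

lemma imag_unit_squared: "imag_unit * imag_unit = (- 1 :: 'a::comm_cstar_algebra)"
proof -
  have "scaleC (- 1) a = - a" for a :: 'a
    using scaleR_scaleC[of "- 1" a] by simp
  then show ?thesis
    by (simp add: imag_unit_def mult_scaleC_left scaleC_scaleC scaleC_one)
qed

lemma cstar_imag_unit [simp]: "cstar imag_unit = - (imag_unit :: 'a::comm_cstar_algebra)"
proof -
  have "cstar (imag_unit :: 'a) = scaleC (- 1) imag_unit"
    by (simp add: imag_unit_def cstar_scaleC scaleC_scaleC)
  also have "\<dots> = - imag_unit"
    using scaleR_scaleC[of "- 1" "imag_unit :: 'a"] by simp
  finally show ?thesis .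
qed

lemma selfadjoint_decomposition:
  fixes u :: "'a::comm_cstar_algebra"
  obtains x y where "cstar x = x" and "cstar y = y" and "u = x + imag_unit * y"
proof
  let ?x = "(1/2) *\<^sub>R (u + cstar u)" and ?y = "(1/2) *\<^sub>R (imag_unit * (cstar u - u))"
  show "cstar ?x = ?x" and "cstar ?y = ?y"
    by (simp_all add: algebra_simps)
  have "?x + imag_unit * ?y = (1/2) *\<^sub>R ((u + cstar u) + (imag_unit * imag_unit) * (cstar u - u))"
    by (simp add: algebra_simps)
  also have "\<dots> = u"
    by (simp add: imag_unit_squared scaleR_2 flip: scaleR_add_left)
  finally show "u = ?x + imag_unit * ?y" ..
qed

lemma cstar_mult_self_eq_sum_squares:
  fixes x y :: "'a::comm_cstar_algebra"
  assumes "cstar x = x" and "cstar y = y"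
  shows "cstar (x + imag_unit * y) * (x + imag_unit * y) = x * x + y * y"
proof -
  have "cstar (x + imag_unit * y) * (x + imag_unit * y) = x * x - (imag_unit * imag_unit) * (y * y)"
    using assms by (simp add: algebra_simps)
  then show ?thesis
    by (simp add: imag_unit_squared)
qed

lemma norm_square_le_norm_sum_squares:
  fixes x y :: "'a::comm_cstar_algebra"
  assumes "cstar x = x" and "cstar y = y"
  shows "norm x * norm x \<le> norm (x * x + y * y)"
proof -
  let ?u = "x + imag_unit * y"
  have "x + x = ?u + cstar ?u"
    using assms by (simp add: algebra_simps)
  then have "norm (x + x) \<le> norm ?u + norm ?u"
    by (metis norm_cstar norm_triangle_ineq)
  then have "norm x \<le> norm ?u"
    by (simp flip: scaleR_2)
  then have "norm x * norm x \<le> norm ?u * norm ?u"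
    by (simp add: mult_mono)
  also have "\<dots> = norm (x * x + y * y)"
    using cstar_identity[of ?u] cstar_mult_self_eq_sum_squares[OF assms] by simp
  finally show ?thesis .
qed

lemma abs_half_gchoose_le_1: "\<bar>(1/2::real) gchoose n\<bar> \<le> 1"
proof (induction n)
  case (Suc k)
  have "(1/2::real) gchoose Suc k = ((1/2 - of_nat k) / of_nat (Suc k)) * ((1/2) gchoose k)"
    using gbinomial_mult_1[of "1/2::real" k] by (simp add: field_simps del: of_nat_Suc)
  moreover have "\<bar>(1/2 - of_nat k) / of_nat (Suc k)\<bar> \<le> (1::real)"
    by (simp add: abs_le_iff)
  ultimately show ?case
    using Suc by (metis abs_ge_zero abs_mult mult_le_one)
qed simp

lemma binomial_series_sqrt:
  fixes h :: "'a::{real_normed_algebra_1,banach}"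
  assumes "norm h < 1"
  shows "summable (\<lambda>n. ((1/2::real) gchoose n) *\<^sub>R h ^ n)"
    and "(\<Sum>n. ((1/2::real) gchoose n) *\<^sub>R h ^ n) * (\<Sum>n. ((1/2::real) gchoose n) *\<^sub>R h ^ n) = 1 + h"
proof -
  define a where "a n = ((1/2::real) gchoose n) *\<^sub>R h ^ n" for n
  have "norm (a n) \<le> norm h ^ n" for n
    unfolding a_def using mult_mono[OF abs_half_gchoose_le_1 norm_power_ineq[of h n]] by simp
  then have abs_summable: "summable (\<lambda>n. norm (a n))"
    by (intro summable_comparison_test[OF _ summable_geometric[of "norm h"]]) (use assms in auto)
  then show "summable (\<lambda>n. ((1/2::real) gchoose n) *\<^sub>R h ^ n)"
    unfolding a_def by (rule summable_norm_cancel)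
  have cauchy_term: "(\<Sum>i\<le>k. a i * a (k - i)) = ((1::real) gchoose k) *\<^sub>R h ^ k" for k
  proof -
    have "(\<Sum>i\<le>k. a i * a (k - i))
        = (\<Sum>i\<le>k. (((1/2::real) gchoose i) * ((1/2) gchoose (k - i))) *\<^sub>R h ^ k)"
      by (intro sum.cong) (simp_all add: a_def flip: power_add)
    also have "\<dots> = ((1::real) gchoose k) *\<^sub>R h ^ k"
      using gbinomial_Vandermonde[of "1/2::real" "1/2" k]
      by (simp add: atLeast0AtMost flip: scaleR_sum_left)
    finally show ?thesis .
  qed
  have "((1::real) gchoose k) = (if k \<le> 1 then 1 else 0)" for k
    using gbinomial_Suc_Suc[of "0::real" "k - 1"] by (cases k) (auto simp: gbinomial_0_left)
  then have "(\<lambda>k. ((1::real) gchoose k) *\<^sub>R h ^ k) sums (\<Sum>k\<in>{0, 1}. ((1::real) gchoose k) *\<^sub>R h ^ k)"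
    by (intro sums_finite) auto
  then have "(\<lambda>k. \<Sum>i\<le>k. a i * a (k - i)) sums (1 + h)"
    by (simp add: cauchy_term)
  with Cauchy_product_sums[OF abs_summable abs_summable]
  show "(\<Sum>n. ((1/2::real) gchoose n) *\<^sub>R h ^ n) * (\<Sum>n. ((1/2::real) gchoose n) *\<^sub>R h ^ n) = 1 + h"
    unfolding a_def by (rule sums_unique2)
qed

lemma selfadjoint_sqrt:
  fixes g :: "'a::comm_cstar_algebra"
  assumes "cstar g = g" and "norm g < c"
  obtains r where "cstar r = r" and "r * r = of_real c - g"
proof -
  have c: "c > 0"
    using assms(2) norm_ge_zero[of g] by linarith
  define h where "h = - ((1/c) *\<^sub>R g)"
  define s where "s = (\<Sum>n. ((1/2::real) gchoose n) *\<^sub>R h ^ n)"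
  have "norm h < 1"
    using assms(2) c by (simp add: h_def field_simps)
  note series = binomial_series_sqrt[OF this, folded s_def]
  have "cstar s = (\<Sum>n. cstar (((1/2::real) gchoose n) *\<^sub>R h ^ n))"
    unfolding s_def by (rule bounded_linear.suminf[OF bounded_linear_cstar series(1)])
  also have "\<dots> = s"
    using assms(1) by (simp add: s_def h_def)
  finally have "cstar s = s" .
  show ?thesis
  proof
    show "cstar (sqrt c *\<^sub>R s) = sqrt c *\<^sub>R s"
      using \<open>cstar s = s\<close> by simp
    have "sqrt c *\<^sub>R s * sqrt c *\<^sub>R s = c *\<^sub>R (s * s)"
      using c by simp
    also have "\<dots> = of_real c - g"
      using c by (simp add: series(2) h_def scaleR_diff_right of_real_def)
    finally show "sqrt c *\<^sub>R s * sqrt c *\<^sub>R s = of_real c - g" .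
  qed
qed

text \<open>In C(X) the second condition says 0 \<le> h \<le> 2t pointwise.\<close>

definition positive_elem :: "'a::comm_cstar_algebra \<Rightarrow> bool" where
  "positive_elem h \<longleftrightarrow> cstar h = h \<and> (\<exists>t. norm (of_real t - h) \<le> t)"

lemma positive_elem_add:
  assumes "positive_elem a" and "positive_elem b"
  shows "positive_elem (a + b)"
proof -
  obtain s t where "norm (of_real s - a) \<le> s" and "norm (of_real t - b) \<le> t"
    using assms unfolding positive_elem_def by blast
  then have "norm ((of_real s - a) + (of_real t - b)) \<le> s + t"
    by (meson add_mono norm_triangle_le)
  then have "norm (of_real (s + t) - (a + b)) \<le> s + t"
    by (simp add: algebra_simps)
  moreover have "cstar (a + b) = a + b"
    using assms unfolding positive_elem_def by simp
  ultimately show ?thesis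
    unfolding positive_elem_def by blast
qed

lemma positive_elem_sum:
  assumes "\<And>i. i \<in> I \<Longrightarrow> positive_elem (f i)"
  shows "positive_elem (\<Sum>i\<in>I. f i)"
  using assms
proof (induction I rule: infinite_finite_induct)
  case (insert i I)
  then show ?case
    by (simp add: positive_elem_add)
qed (simp_all add: positive_elem_def exI[of _ 0])

lemma positive_elem_sqrt:
  assumes "positive_elem h" and "e > 0"
  obtains r where "cstar r = r" and "r * r = h + of_real e"
proof -
  obtain t where t: "norm (of_real t - h) \<le> t" and "cstar h = h"
    using assms(1) unfolding positive_elem_def by blast
  then obtain r where "cstar r = r" and "r * r = of_real (t + e) - (of_real t - h)"
    using selfadjoint_sqrt[of "of_real t - h" "t + e"] assms(2) by force
  then show ?thesis
    using that by (simp add: of_real_add)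
qed

lemma positive_elem_selfadjoint_square:
  assumes "cstar x = x"
  shows "positive_elem (x * x)"
proof -
  define c where "c = norm x * norm x + 1"
  have "cstar (x * x) = x * x" and "norm (x * x) < c"
    using assms norm_selfadjoint_square[OF assms] by (simp_all add: c_def)
  then obtain s where s: "cstar s = s" "s * s = of_real c - x * x"
    by (rule selfadjoint_sqrt)
  have "norm (of_real c - x * x) = norm s * norm s"
    using norm_selfadjoint_square[OF s(1)] s(2) by simp
  also have "\<dots> \<le> norm (s * s + x * x)"
    by (rule norm_square_le_norm_sum_squares[OF s(1) assms])
  also have "\<dots> = c"
    using s(2) \<open>norm (x * x) < c\<close> by (simp add: abs_of_pos le_less_trans[OF norm_ge_zero])
  finally show ?thesis
    using assms unfolding positive_elem_def by auto
qed

lemma positive_elem_cstar_mult_self: "positive_elem (cstar u * u)"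
proof -
  obtain x y where "cstar x = x" "cstar y = y" "u = x + imag_unit * y"
    by (rule selfadjoint_decomposition)
  then have "cstar u * u = x * x + y * y"
    using cstar_mult_self_eq_sum_squares by blast
  then show ?thesis
    using \<open>cstar x = x\<close> \<open>cstar y = y\<close>
    by (simp only: positive_elem_add positive_elem_selfadjoint_square)
qed

lemma norm_le_norm_add_positive:
  fixes a b :: "'a::comm_cstar_algebra"
  assumes "positive_elem a" and "positive_elem b"
  shows "norm a \<le> norm (a + b)"
proof (rule field_le_epsilon)
  fix e :: real
  assume "e > 0"
  then obtain r s where r: "cstar r = r" "r * r = a + of_real (e/3)"
    and s: "cstar s = s" "s * s = b + of_real (e/3)"
    using positive_elem_sqrt[OF assms(1)] positive_elem_sqrt[OF assms(2)]
    by (metis divide_pos_pos zero_less_numeral)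
  have "norm a \<le> norm (a + of_real (e/3)) + e/3"
    using norm_triangle_ineq4[of "a + of_real (e/3)" "of_real (e/3)"] \<open>e > 0\<close> by simp
  also have "norm (a + of_real (e/3)) = norm r * norm r"
    using norm_selfadjoint_square[OF r(1)] r(2) by simp
  also have "\<dots> \<le> norm (r * r + s * s)"
    by (rule norm_square_le_norm_sum_squares[OF r(1) s(1)])
  also have "r * r + s * s = (a + b) + of_real (2 * e/3)"
    using r(2) s(2) by (simp add: algebra_simps flip: of_real_add)
  also have "norm \<dots> \<le> norm (a + b) + 2 * e/3"
    using norm_triangle_ineq[of "a + b" "of_real (2 * e/3)"] \<open>e > 0\<close> by simp
  finally show "norm a \<le> norm (a + b) + e"
    by simp
qed

lemma hinner_self_eq_zeroD:
  assumes "x \<in> hilbA" and "hinner x x = 0"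
  shows "x j = 0"
proof -
  define p where "p k = cstar (x k) * x k" for k
  have "p sums 0"
    using assms unfolding hilbA_def hinner_def p_def by (simp add: sums_iff)
  then have "(\<lambda>n. norm (\<Sum>k<n. p k)) \<longlonglongrightarrow> 0"
    unfolding sums_def by (simp add: tendsto_norm_zero)
  moreover have "norm (p j) \<le> norm (\<Sum>k<n. p k)" if "n > j" for n
  proof -
    have "(\<Sum>k<n. p k) = p j + (\<Sum>k\<in>{..<n} - {j}. p k)"
      using that by (simp add: sum.remove)
    moreover have "positive_elem (\<Sum>k\<in>{..<n} - {j}. p k)"
      by (rule positive_elem_sum) (simp add: p_def positive_elem_cstar_mult_self)
    moreover have "positive_elem (p j)"
      unfolding p_def by (rule positive_elem_cstar_mult_self)
    ultimately show ?thesis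
      using norm_le_norm_add_positive by metis
  qed
  ultimately have "norm (p j) \<le> 0"
    by (intro LIMSEQ_le_const) (auto intro: exI[of _ "Suc j"])
  then show ?thesis
    using cstar_identity[of "x j"] unfolding p_def by (simp add: mult_le_0_iff)
qed

lemma cstar_scaled_mult_scaled:
  "cstar (a * x) * (b * x) = (cstar a * b) * (cstar x * (x::'a::comm_cstar_algebra))"
  by (simp add: ac_simps)

lemma scaled_in_hilbA: "x \<in> hilbA \<Longrightarrow> (\<lambda>k. a * x k) \<in> hilbA"
  unfolding hilbA_def mem_Collect_eq cstar_scaled_mult_scaled by (rule summable_mult)

lemma hinner_scaled_self:
  assumes "x \<in> hilbA"
  shows "hinner (\<lambda>k. a * x k) (\<lambda>k. b * x k) = cstar a * b * hinner x x"
  using assms unfolding hilbA_def hinner_def cstar_scaled_mult_scaled by (simp add: suminf_mult)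

lemma selfadjoint_eigenvector_cstar:
  assumes "selfadjoint_op F" and x: "x \<in> hilbA" and "F x = (\<lambda>k. \<alpha> * x k)"
  shows "F x = (\<lambda>k. cstar \<alpha> * x k)"
proof -
  have "hinner (F x) x = hinner x (F x)"
    using assms(1) x unfolding selfadjoint_op_def by blast
  moreover have "hinner (F x) x = cstar \<alpha> * hinner x x"
    using hinner_scaled_self[OF x, of \<alpha> 1] assms(3) by simp
  moreover have "hinner x (F x) = \<alpha> * hinner x x"
    using hinner_scaled_self[OF x, of 1 \<alpha>] assms(3) by simp
  moreover define d where "d = \<alpha> - cstar \<alpha>"
  ultimately have "d * hinner x x = 0"
    by (simp add: left_diff_distrib)
  have "hinner (\<lambda>k. d * x k) (\<lambda>k. d * x k) = cstar d * (d * hinner x x)"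
    unfolding hinner_scaled_self[OF x] by (rule mult.assoc)
  also have "\<dots> = 0"
    using \<open>d * hinner x x = 0\<close> by simp
  finally have "d * x k = 0" for k
    by (rule hinner_self_eq_zeroD[OF scaled_in_hilbA[OF x]])
  then have "\<alpha> * x k = cstar \<alpha> * x k" for k
    by (simp add: d_def left_diff_distrib)
  with assms(3) show ?thesis
    by simp
qed

lemma point_spectrumA_cstar:
  assumes "selfadjoint_op F" and "\<alpha> \<in> point_spectrumA F"
  shows "cstar \<alpha> \<in> point_spectrumA F"
proof -
  obtain x where x: "x \<in> hilbA" "x \<noteq> (\<lambda>_. 0)" and eigen: "F x = (\<lambda>k. \<alpha> * x k)"
    using assms(2) unfolding point_spectrumA_def by (auto simp: fun_eq_iff)
  have "F x = (\<lambda>k. cstar \<alpha> * x k)"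
    by (rule selfadjoint_eigenvector_cstar[OF assms(1) x(1) eigen])
  then have "(\<lambda>k. F x k - cstar \<alpha> * x k) = (\<lambda>_. 0)"
    by simp
  with x show ?thesis
    unfolding point_spectrumA_def by blast
qed

theorem lemma2p13:
  fixes F :: "(nat \<Rightarrow> 'a::comm_cstar_algebra) \<Rightarrow> (nat \<Rightarrow> 'a)"
  assumes "F \<in> Ba" and "selfadjoint_op F"
  shows "\<alpha> \<in> point_spectrumA F \<longleftrightarrow> cstar \<alpha> \<in> point_spectrumA F"
  using point_spectrumA_cstar[OF assms(2), of \<alpha>] point_spectrumA_cstar[OF assms(2), of "cstar \<alpha>"]
  by (metis cstar_cstar)

end
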